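(* Let $C$ be a totally bounded subset of a metric space $(X,d)$ with II-modulus of total boundedness $\gamma$, $T:C\to C$ nonexpansive with $\mathrm{Fix}(T)\ne\emptyset$, $x\in C$, $x_n:=T^nx$, and assume $(x_n)$ is asymptotically regular with rate of asymptotic regularity $\Phi^{++}$. Then for all $k\in\mathbb{N}$ and $g:\mathbb{N}\to\mathbb{N}$ there exists $N\le\Theta:=\Theta_0(\gamma^M(4k+3))+K$ such that for all $i,j\in[N,N+g(N)]$ and all $m\ge N$: $d(x_i,x_j)\le\frac1{k+1}$ and $d(x_m,Tx_m)\le\frac1{k+1}$. Here $K=(\Phi^{++})^M(k)$, $\Theta_0(0)=0$ and $\Theta_0(n+1)=(\Phi^{++})^M\big((g^M(\Theta_0(n)+K)+K)(4k+4)\big)$.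
   Context: II-modulus $\gamma$ for $C$: for every $k$ and every sequence $(y_n)$ in $C$ there are $0\le i<j\le\gamma(k)$ with $d(y_i,y_j)\le\frac1{k+1}$. Nonexpansive: $d(Tx,Ty)\le d(x,y)$. A rate of asymptotic regularity is $\Phi^{++}:\mathbb{N}\to\mathbb{N}$ with $d(x_n,Tx_n)\le\frac1{k+1}$ for all $k$ and all $n\ge\Phi^{++}(k)$. For $f:\mathbb{N}\to\mathbb{N}$, $f^M(n):=\max\{f(i)\mid i\le n\}$. *)

theory Defs
  imports "HOL-Analysis.Analysis"
begin

definition II_modulus :: "'a::metric_space set \<Rightarrow> (nat \<Rightarrow> nat) \<Rightarrow> bool" where
  "II_modulus C \<gamma> \<longleftrightarrow>
     (\<forall>k. \<forall>y::nat \<Rightarrow> 'a. (\<forall>n. y n \<in> C) \<longrightarrow>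
        (\<exists>i j. i < j \<and> j \<le> \<gamma> k \<and> dist (y i) (y j) \<le> 1 / (real k + 1)))"

definition nonexpansive_on :: "'a::metric_space set \<Rightarrow> ('a \<Rightarrow> 'a) \<Rightarrow> bool" where
  "nonexpansive_on C T \<longleftrightarrow> T ` C \<subseteq> C \<and> (\<forall>x\<in>C. \<forall>y\<in>C. dist (T x) (T y) \<le> dist x y)"

definition rate_AR :: "(nat \<Rightarrow> 'a::metric_space) \<Rightarrow> ('a \<Rightarrow> 'a) \<Rightarrow> (nat \<Rightarrow> nat) \<Rightarrow> bool" where
  "rate_AR xs T \<Phi> \<longleftrightarrow> (\<forall>k n. \<Phi> k \<le> n \<longrightarrow> dist (xs n) (T (xs n)) \<le> 1 / (real k + 1))"

definition maxf :: "(nat \<Rightarrow> nat) \<Rightarrow> nat \<Rightarrow> nat" where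
  "maxf f n = Max (f ` {..n})"

fun Theta0 :: "(nat \<Rightarrow> nat) \<Rightarrow> (nat \<Rightarrow> nat) \<Rightarrow> nat \<Rightarrow> nat \<Rightarrow> nat" where
  "Theta0 \<Phi> g k 0 = 0"
| "Theta0 \<Phi> g k (Suc n) =
     maxf \<Phi> ((maxf g (Theta0 \<Phi> g k n + maxf \<Phi> k) + maxf \<Phi> k) * (4 * k + 4))"

end

theory Submission
  imports Defs
begin

text \<open>
  Along the subsequence \<open>n\<^sub>i = \<Theta>\<^sub>0(i) + K\<close> of indices, the II-modulus yields \<open>i < j \<le> \<gamma>(4k+3)\<close>
  with \<open>d(x\<^bsub>n\<^sub>i\<^esub>, x\<^bsub>n\<^sub>j\<^esub>) \<le> 1/(4k+4)\<close>; take \<open>N = n\<^sub>i\<close>. By nonexpansiveness every shift of the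
  window \<open>[N, N + g(N)]\<close> by \<open>n\<^sub>j - N\<close> moves points of the orbit by at most \<open>1/(4k+4)\<close>,
  and the shifted window lies beyond \<open>\<Phi>(a)\<close> for an \<open>a\<close> so large that its \<open>g(N)\<close> steps
  of size \<open>\<le> 1/(a+1)\<close> add up to less than \<open>1/(4k+4)\<close>.
\<close>

lemma maxf_upper: "i \<le> n \<Longrightarrow> f i \<le> maxf f n"
  unfolding maxf_def by (rule Max_ge) auto

lemma maxf_mono: "m \<le> n \<Longrightarrow> maxf f m \<le> maxf f n"
  unfolding maxf_def by (rule Max_mono) auto

lemma mono_Theta0: "mono (Theta0 \<Phi> g k)"
  unfolding mono_iff_le_Suc
proof
  fix n show "Theta0 \<Phi> g k n \<le> Theta0 \<Phi> g k (Suc n)"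
  proof (induction n)
    case (Suc n)
    then show ?case
      by (simp only: Theta0.simps) (intro maxf_mono mult_right_mono add_right_mono; simp)
  qed simp
qed

lemma nonexpansive_on_funpow:
  assumes "nonexpansive_on C T"
  shows "nonexpansive_on C (T ^^ n)"
proof (induction n)
  case (Suc n)
  have "(T ^^ Suc n) ` C \<subseteq> C"
    using Suc assms unfolding nonexpansive_on_def by (auto simp: image_subset_iff)
  moreover have "dist ((T ^^ Suc n) y) ((T ^^ Suc n) z) \<le> dist y z" if "y \<in> C" "z \<in> C" for y z
  proof -
    have "dist (T ((T ^^ n) y)) (T ((T ^^ n) z)) \<le> dist ((T ^^ n) y) ((T ^^ n) z)"
      using Suc assms that unfolding nonexpansive_on_def by blast
    also have "\<dots> \<le> dist y z"
      using Suc that unfolding nonexpansive_on_def by blast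
    finally show ?thesis by simp
  qed
  ultimately show ?case unfolding nonexpansive_on_def by blast
qed (simp add: nonexpansive_on_def)

lemma funpow_in_if_nonexpansive_on:
  "nonexpansive_on C T \<Longrightarrow> x \<in> C \<Longrightarrow> (T ^^ n) x \<in> C"
  using nonexpansive_on_funpow[of C T n] unfolding nonexpansive_on_def by blast

lemma orbit_dist_shift:
  assumes "nonexpansive_on C T" and "x \<in> C"
  shows "dist ((T ^^ (m + s)) x) ((T ^^ (n + s)) x) \<le> dist ((T ^^ m) x) ((T ^^ n) x)"
proof -
  have "(T ^^ (l + s)) x = (T ^^ s) ((T ^^ l) x)" for l
    by (metis add.commute comp_apply funpow_add)
  then show ?thesis
    using nonexpansive_on_funpow[OF assms(1), of s] funpow_in_if_nonexpansive_on[OF assms] by (simp add: nonexpansive_on_def)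
qed

lemma dist_le_steps:
  fixes xs :: "nat \<Rightarrow> 'a::metric_space"
  assumes "\<And>l. M \<le> l \<Longrightarrow> dist (xs l) (xs (Suc l)) \<le> e" and "M \<le> m"
  shows "dist (xs m) (xs (m + d)) \<le> real d * e"
proof (induction d)
  case (Suc d)
  have "dist (xs m) (xs (m + Suc d)) \<le> dist (xs m) (xs (m + d)) + dist (xs (m + d)) (xs (Suc (m + d)))"
    by (simp add: dist_triangle)
  also have "\<dots> \<le> real d * e + e"
    using Suc assms by (intro add_mono) auto
  finally show ?case by (simp add: algebra_simps)
qed simp

lemma orbit_dist_via_shift:
  assumes "nonexpansive_on C T" and "x \<in> C"
    and steps: "\<And>l. M \<le> l \<Longrightarrow> dist ((T ^^ l) x) (T ((T ^^ l) x)) \<le> e"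
  shows "dist ((T ^^ (N + s)) x) ((T ^^ (N + s + d)) x)
           \<le> 2 * dist ((T ^^ N) x) ((T ^^ M) x) + real d * e"
proof -
  let ?x = "\<lambda>n. (T ^^ n) x" and ?\<delta> = "dist ((T ^^ N) x) ((T ^^ M) x)"
  have "dist (?x (N + s)) (?x (N + s + d))
      \<le> dist (?x (N + s)) (?x (M + s)) + dist (?x (M + s)) (?x (M + s + d))
        + dist (?x (M + s + d)) (?x (N + s + d))"
    using dist_triangle[of "?x (N + s)" "?x (N + s + d)" "?x (M + s)"]
      dist_triangle[of "?x (M + s)" "?x (N + s + d)" "?x (M + s + d)"] by linarith
  also have "\<dots> \<le> ?\<delta> + real d * e + ?\<delta>"
  proof (intro add_mono)
    show "dist (?x (N + s)) (?x (M + s)) \<le> ?\<delta>"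
      using orbit_dist_shift[OF assms(1,2)] .
    show "dist (?x (M + s + d)) (?x (N + s + d)) \<le> ?\<delta>"
      using orbit_dist_shift[OF assms(1,2), of M "s + d" N]
      by (simp add: dist_commute add.assoc)
    show "dist (?x (M + s)) (?x (M + s + d)) \<le> real d * e"
      using steps by (intro dist_le_steps[where M = M]) auto
  qed
  finally show ?thesis by simp
qed

lemma orbit_dist_window:
  assumes "nonexpansive_on C T" and "x \<in> C"
    and steps: "\<And>l. M \<le> l \<Longrightarrow> dist ((T ^^ l) x) (T ((T ^^ l) x)) \<le> e"
    and "p \<in> {N..N + L}" and "q \<in> {N..N + L}"
  shows "dist ((T ^^ p) x) ((T ^^ q) x) \<le> 2 * dist ((T ^^ N) x) ((T ^^ M) x) + real L * e"
proof -
  have "0 \<le> e"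
    using steps[OF order_refl] zero_le_dist[of "(T ^^ M) x" "T ((T ^^ M) x)"] by linarith
  have ordered: "dist ((T ^^ p) x) ((T ^^ q) x) \<le> 2 * dist ((T ^^ N) x) ((T ^^ M) x) + real L * e"
    if "p \<in> {N..N + L}" "q \<in> {N..N + L}" "p \<le> q" for p q
  proof -
    have "dist ((T ^^ (N + (p - N))) x) ((T ^^ (N + (p - N) + (q - p))) x)
        \<le> 2 * dist ((T ^^ N) x) ((T ^^ M) x) + real (q - p) * e"
      by (rule orbit_dist_via_shift[OF assms(1-3)])
    moreover have "real (q - p) * e \<le> real L * e"
      using that \<open>0 \<le> e\<close> by (intro mult_right_mono) auto
    moreover have "N + (p - N) = p" and "N + (p - N) + (q - p) = q"
      using that by auto
    ultimately show ?thesis by simp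
  qed
  show ?thesis
  proof (cases "p \<le> q")
    case True then show ?thesis using ordered assms(4,5) by simp
  next
    case False then show ?thesis using ordered[of q p] assms(4,5) by (simp add: dist_commute)
  qed
qed

lemma rate_AR_window:
  assumes "nonexpansive_on C T" and "x \<in> C" and "rate_AR (\<lambda>n. (T ^^ n) x) T \<Phi>"
    and "\<Phi> a \<le> M" and "L * (4 * k + 4) \<le> a"
    and close: "dist ((T ^^ N) x) ((T ^^ M) x) \<le> 1 / (4 * real k + 4)"
    and "p \<in> {N..N + L}" and "q \<in> {N..N + L}"
  shows "dist ((T ^^ p) x) ((T ^^ q) x) \<le> 1 / (real k + 1)"
proof -
  have steps: "dist ((T ^^ l) x) (T ((T ^^ l) x)) \<le> 1 / (real a + 1)" if "M \<le> l" for l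
    using assms(3,4) that unfolding rate_AR_def by auto
  have "real (L * (4 * k + 4)) \<le> real a"
    using assms(5) by linarith
  then have small_steps: "real L * (1 / (real a + 1)) \<le> 1 / (4 * real k + 4)"
    by (simp add: field_simps)
  have "dist ((T ^^ p) x) ((T ^^ q) x)
      \<le> 2 * dist ((T ^^ N) x) ((T ^^ M) x) + real L * (1 / (real a + 1))"
    by (rule orbit_dist_window[OF assms(1,2) steps assms(7,8)])
  also have "\<dots> \<le> 3 / (4 * real k + 4)"
    using close small_steps by linarith
  also have "\<dots> \<le> 1 / (real k + 1)"
    by (simp add: field_simps)
  finally show ?thesis .
qed

theorem theorem7p8:
  fixes C :: "'a::metric_space set" and T :: "'a \<Rightarrow> 'a" and x :: 'a
    and \<gamma> \<Phi> :: "nat \<Rightarrow> nat"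
  assumes "totally_bounded C"
    and "II_modulus C \<gamma>"
    and "nonexpansive_on C T"
    and "\<exists>p\<in>C. T p = p"
    and "x \<in> C"
    and "rate_AR (\<lambda>n. (T ^^ n) x) T \<Phi>"
  shows "\<forall>(k::nat) (g::nat \<Rightarrow> nat).
           \<exists>N. N \<le> Theta0 \<Phi> g k (maxf \<gamma> (4 * k + 3)) + maxf \<Phi> k \<and>
             (\<forall>i j. N \<le> i \<and> i \<le> N + g N \<and> N \<le> j \<and> j \<le> N + g N \<longrightarrow>
                dist ((T ^^ i) x) ((T ^^ j) x) \<le> 1 / (real k + 1)) \<and>
             (\<forall>m\<ge>N. dist ((T ^^ m) x) (T ((T ^^ m) x)) \<le> 1 / (real k + 1))"
proof (intro allI)
  fix k :: nat and g :: "nat \<Rightarrow> nat"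
  define n where "n i = Theta0 \<Phi> g k i + maxf \<Phi> k" for i
  obtain i j where "i < j" and "j \<le> \<gamma> (4 * k + 3)"
    and close: "dist ((T ^^ n i) x) ((T ^^ n j) x) \<le> 1 / (4 * real k + 4)"
    using assms(2) funpow_in_if_nonexpansive_on[OF assms(3,5)] unfolding II_modulus_def
    by (elim allE[of _ "4 * k + 3"] allE[of _ "\<lambda>i. (T ^^ n i) x"]) (auto simp: algebra_simps)
  define a where "a = (maxf g (n i) + maxf \<Phi> k) * (4 * k + 4)"
  have "g (n i) * (4 * k + 4) \<le> a"
    using maxf_upper[of "n i" "n i" g] unfolding a_def by (intro mult_right_mono) auto
  moreover have "\<Phi> a \<le> n j"
    using maxf_upper[of a a \<Phi>] monoD[OF mono_Theta0[of \<Phi> g k], of "Suc i" j] \<open>i < j\<close>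
    unfolding a_def n_def by simp
  moreover have "i \<le> maxf \<gamma> (4 * k + 3)"
    using \<open>i < j\<close> \<open>j \<le> \<gamma> (4 * k + 3)\<close> maxf_upper[of "4 * k + 3" "4 * k + 3" \<gamma>] by simp
  then have "n i \<le> Theta0 \<Phi> g k (maxf \<gamma> (4 * k + 3)) + maxf \<Phi> k"
    using monoD[OF mono_Theta0[of \<Phi> g k]] unfolding n_def by simp
  moreover have "\<Phi> k \<le> n i"
    using maxf_upper[of k k \<Phi>] unfolding n_def by simp
  ultimately show "\<exists>N. N \<le> Theta0 \<Phi> g k (maxf \<gamma> (4 * k + 3)) + maxf \<Phi> k \<and>
      (\<forall>i j. N \<le> i \<and> i \<le> N + g N \<and> N \<le> j \<and> j \<le> N + g N \<longrightarrow>
         dist ((T ^^ i) x) ((T ^^ j) x) \<le> 1 / (real k + 1)) \<and>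
      (\<forall>m\<ge>N. dist ((T ^^ m) x) (T ((T ^^ m) x)) \<le> 1 / (real k + 1))"
    using rate_AR_window[OF assms(3,5,6) _ _ close] assms(6) unfolding rate_AR_def
    by (intro exI[of _ "n i"]) auto
qed

end
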